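(* Let $(E,B,p,\Gamma)$ be a compact graph bundle and $M\subseteq E$ a nowhere dense closed set. Then the set $\{b\in B: M_b \text{ is totally disconnected}\}$ is residual in $B$.
   Context: Compact graph bundle $(E,B,p,\Gamma)$: $E,B$ compact metric spaces, $\Gamma$ a graph (nonempty compact metric space that is a finite union of arcs pairwise disjoint or meeting only at end-points), $p:E\to B$ a continuous surjection such that every $b\in B$ has an open neighbourhood $U$ and a homeomorphism $h:p^{-1}(U)\to U\times\Gamma$ with $\mathrm{pr}_1\circ h=p$. $M_b=M\cap p^{-1}(b)$. Residual: complement of a countable union of nowhere dense sets. *)

theory Defs
  imports "HOL-Analysis.Analysis"
begin

definition is_graph :: "'g::metric_space set \<Rightarrow> bool" where
  "is_graph G \<longleftrightarrow> G \<noteq> {} \<and> compact G \<and>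
     (\<exists>gs :: (real \<Rightarrow> 'g) list.
        (\<forall>g\<in>set gs. arc g) \<and>
        G = \<Union> (path_image ` set gs) \<and>
        (\<forall>i<length gs. \<forall>j<length gs. i \<noteq> j \<longrightarrow>
           path_image (gs!i) \<inter> path_image (gs!j) \<subseteq>
             {pathstart (gs!i), pathfinish (gs!i)} \<inter> {pathstart (gs!j), pathfinish (gs!j)}))"

definition compact_graph_bundle ::
  "'e::metric_space set \<Rightarrow> 'b::metric_space set \<Rightarrow> ('e \<Rightarrow> 'b) \<Rightarrow> 'g::metric_space set \<Rightarrow> bool" where
  "compact_graph_bundle E B p G \<longleftrightarrow>
     compact E \<and> compact B \<and> is_graph G \<and>
     continuous_on E p \<and> p ` E = B \<and>
     (\<forall>b\<in>B. \<exists>U h k. openin (top_of_set B) U \<and> b \<in> U \<and>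
        homeomorphism {x\<in>E. p x \<in> U} (U \<times> G) h k \<and>
        (\<forall>x\<in>{x\<in>E. p x \<in> U}. fst (h x) = p x))"

definition nowhere_dense_in :: "'a::topological_space set \<Rightarrow> 'a set \<Rightarrow> bool" where
  "nowhere_dense_in S A \<longleftrightarrow> A \<subseteq> S \<and>
     (\<forall>V. openin (top_of_set S) V \<and> V \<subseteq> S \<inter> closure A \<longrightarrow> V = {})"

definition residual_in :: "'a::topological_space set \<Rightarrow> 'a set \<Rightarrow> bool" where
  "residual_in S R \<longleftrightarrow>
     (\<exists>\<F>. countable \<F> \<and> (\<forall>N\<in>\<F>. nowhere_dense_in S N) \<and> R = S - \<Union>\<F>)"

definition totally_disconnected :: "'a::topological_space set \<Rightarrow> bool" where
  "totally_disconnected S \<longleftrightarrow> (\<forall>C. C \<subseteq> S \<and> connected C \<longrightarrow> (\<exists>x. C \<subseteq> {x}))"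

end

theory Submission
  imports Defs
begin

(*
  Over a chart U \<times> \<Gamma> of the bundle the fibre M_b is homeomorphic to
  K_b = {y \<in> \<Gamma>. k (b, y) \<in> M}.  In a graph a set is totally disconnected iff it has
  empty interior: a connected set with two points contains an open sub-arc, and every
  nonempty open set contains a nondegenerate arc.  So M_b fails to be totally disconnected
  iff b lies in one of the slice sets {b \<in> U. k ({b} \<times> J) \<subseteq> M}, J ranging over a
  countable \<pi>-base of \<Gamma>.  Such a set is closed in U, and has empty interior since
  otherwise k (V \<times> J) would be a nonempty open subset of M.  Finitely many charts cover
  the compact base, giving countably many nowhere dense exceptional sets.
*)

lemma totally_disconnected_subset:
  "totally_disconnected T \<Longrightarrow> S \<subseteq> T \<Longrightarrow> totally_disconnected S"
  unfolding totally_disconnected_def by blast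

lemma totally_disconnected_injective_preimage:
  assumes f: "continuous_on S f" "inj_on f S" "f ` S \<subseteq> T" and T: "totally_disconnected T"
  shows "totally_disconnected S"
  unfolding totally_disconnected_def
proof (intro allI impI)
  fix C assume C: "C \<subseteq> S \<and> connected C"
  then have "connected (f ` C)"
    using f(1) by (meson connected_continuous_image continuous_on_subset)
  moreover have "f ` C \<subseteq> T"
    using C f(3) by blast
  ultimately obtain y where "f ` C \<subseteq> {y}"
    using T unfolding totally_disconnected_def by blast
  then have "x = x'" if "x \<in> C" "x' \<in> C" for x x'
    using that C f(2) by (auto dest: inj_onD)
  then show "\<exists>x. C \<subseteq> {x}"
    by blast
qed

section \<open>Graphs\<close>

definition arc_decomposition :: "(real \<Rightarrow> 'a::topological_space) list \<Rightarrow> 'a set \<Rightarrow> bool" where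
  "arc_decomposition gs G \<longleftrightarrow>
     (\<forall>g\<in>set gs. arc g) \<and> G = \<Union> (path_image ` set gs) \<and>
     (\<forall>i<length gs. \<forall>j<length gs. i \<noteq> j \<longrightarrow>
        path_image (gs!i) \<inter> path_image (gs!j) \<subseteq>
          {pathstart (gs!i), pathfinish (gs!i)} \<inter> {pathstart (gs!j), pathfinish (gs!j)})"

lemma is_graph_iff_arc_decomposition:
  "is_graph G \<longleftrightarrow> G \<noteq> {} \<and> compact G \<and> (\<exists>gs. arc_decomposition gs G)"
  unfolding is_graph_def arc_decomposition_def by blast

lemma arc_decomposition_nth_arc:
  "arc_decomposition gs G \<Longrightarrow> i < length gs \<Longrightarrow> arc (gs!i)"
  unfolding arc_decomposition_def by simp

lemma arc_decomposition_memE: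
  assumes "arc_decomposition gs G" "x \<in> G"
  obtains i where "i < length gs" "x \<in> path_image (gs!i)"
  using assms unfolding arc_decomposition_def by (metis UnionE imageE in_set_conv_nth)

lemma arc_decomposition_open_segment_openin:
  fixes G :: "'a::t2_space set"
  assumes gs: "arc_decomposition gs G" and i: "i < length gs"
    and ab: "0 \<le> \<alpha>" "\<alpha> < \<beta>" "\<beta> \<le> 1"
  shows "openin (top_of_set G) ((gs!i) ` {\<alpha><..<\<beta>})"
proof -
  define g where "g = gs!i"
  have "arc g" using gs i unfolding g_def by (rule arc_decomposition_nth_arc)
  then have inj: "inj_on g {0..1}" and cg: "continuous_on {0..1} g"
    by (auto simp: arc_def path_def)
  define Ends where "Ends = g ` {0..\<alpha>} \<union> g ` {\<beta>..1}"
  define Others where "Others = (\<Union>j\<in>{j. j < length gs \<and> j \<noteq> i}. path_image (gs!j))"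
  have "compact (g ` {0..\<alpha>})" "compact (g ` {\<beta>..1})"
    using ab by (auto intro!: compact_continuous_image continuous_on_subset[OF cg])
  moreover have "compact (path_image (gs!j))" if "j < length gs" for j
    using gs that by (simp add: arc_decomposition_def compact_path_image arc_imp_path)
  ultimately have closed: "closed (Ends \<union> Others)"
    unfolding Ends_def Others_def by (intro closed_Un closed_UN) (auto intro: compact_imp_closed)
  have "G = (\<Union>j<length gs. path_image (gs!j))"
    using gs by (auto simp: arc_decomposition_def in_set_conv_nth) (use nth_mem in blast)
  also have "\<dots> = path_image g \<union> Others"
    using i unfolding Others_def g_def by auto
  finally have "G = path_image g \<union> Others" .
  moreover have "path_image g = Ends \<union> g ` {\<alpha><..<\<beta>}"
  proof -
    have "{0..1} = {0..\<alpha>} \<union> {\<alpha><..<\<beta>} \<union> {\<beta>..(1::real)}"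
      using ab by auto
    then show ?thesis unfolding path_image_def Ends_def by auto
  qed
  moreover have "g ` {\<alpha><..<\<beta>} \<inter> Ends = {}"
  proof -
    have "{\<alpha><..<\<beta>} \<inter> ({0..\<alpha>} \<union> {\<beta>..1}) = {}"
      and "{\<alpha><..<\<beta>} \<subseteq> {0..1}" "{0..\<alpha>} \<union> {\<beta>..1} \<subseteq> {0..1}"
      using ab by auto
    then show ?thesis
      using inj_on_image_Int[OF inj, of "{\<alpha><..<\<beta>}" "{0..\<alpha>} \<union> {\<beta>..1}"]
      unfolding Ends_def by (simp add: image_Un)
  qed
  \<comment> \<open>the other arcs meet \<open>g\<close> only in its end-points, which lie in \<open>Ends\<close>\<close>
  moreover have "path_image g \<inter> Others \<subseteq> Ends"
  proof
    fix y assume y: "y \<in> path_image g \<inter> Others"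
    then obtain j where "j < length gs" "j \<noteq> i" "y \<in> path_image (gs!j)"
      unfolding Others_def by blast
    then have "y \<in> {g 0, g 1}"
      using gs i y unfolding arc_decomposition_def g_def pathstart_def pathfinish_def by blast
    then show "y \<in> Ends" using ab unfolding Ends_def by auto
  qed
  ultimately have "g ` {\<alpha><..<\<beta>} = G \<inter> - (Ends \<union> Others)"
    by blast
  moreover have "openin (top_of_set G) (G \<inter> - (Ends \<union> Others))"
    using closed by (intro openin_open_Int open_Compl)
  ultimately show ?thesis
    unfolding g_def by simp
qed

lemma arc_image_closed_segment_subset:
  fixes g :: "real \<Rightarrow> 'a::t2_space"
  assumes "arc g" and C: "C \<subseteq> path_image g" "connected C"
    and uv: "u \<in> {0..1}" "v \<in> {0..1}" "g u \<in> C" "g v \<in> C"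
  shows "g ` closed_segment u v \<subseteq> C"
proof -
  obtain k where hom: "homeomorphism {0..1} (path_image g) g k"
    using homeomorphism_arc[OF \<open>arc g\<close>] by blast
  have "connected (k ` C)"
    using hom C by (meson connected_continuous_image continuous_on_subset homeomorphism_def)
  moreover have "u \<in> k ` C" "v \<in> k ` C"
    using hom uv by (metis homeomorphism_def image_eqI)+
  ultimately have "closed_segment u v \<subseteq> k ` C"
    by (meson closed_segment_subset is_interval_connected_1 is_interval_convex_1)
  then have "g ` closed_segment u v \<subseteq> g ` k ` C"
    by (rule image_mono)
  also have "\<dots> = (\<lambda>y. g (k y)) ` C"
    by (simp add: image_image)
  also have "\<dots> = C"
    using hom C unfolding homeomorphism_def by (simp add: subset_iff)
  finally show ?thesis .
qed

lemma connected_subset_arc_decomposition_trapped: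
  fixes G :: "'a::t2_space set"
  assumes gs: "arc_decomposition gs G" and i: "i < length gs"
    and C: "C \<subseteq> G" "connected C"
    and ab: "0 \<le> a" "a < b" "b \<le> 1" "(gs!i) a \<notin> C" "(gs!i) b \<notin> C"
    and meets: "C \<inter> (gs!i) ` {a<..<b} \<noteq> {}"
  shows "C \<subseteq> (gs!i) ` {a<..<b}"
proof -
  define g where "g = gs!i"
  have "continuous_on {0..1} g"
    using arc_decomposition_nth_arc[OF gs i] unfolding g_def by (simp add: arc_def path_def)
  then have "closedin (top_of_set C) (C \<inter> g ` {a..b})"
    using ab by (intro closedin_closed_Int compact_imp_closed compact_continuous_image)
      (auto elim: continuous_on_subset)
  moreover have "C \<inter> g ` {a..b} = C \<inter> g ` {a<..<b}"
  proof -
    have "{a..b} = insert a (insert b {a<..<b})" using ab by auto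
    then show ?thesis using ab unfolding g_def by auto
  qed
  ultimately have "closedin (top_of_set C) (C \<inter> g ` {a<..<b})"
    by simp
  moreover have "openin (top_of_set C) (C \<inter> g ` {a<..<b})"
    using openin_subtopology_Int2[OF arc_decomposition_open_segment_openin[OF gs i ab(1-3)], of C] C(1)
    by (simp add: subtopology_subtopology Int_absorb1 g_def)
  ultimately show ?thesis
    using C(2) meets unfolding connected_clopen g_def by blast
qed

lemma arc_decomposition_connected_meets_open_arc:
  fixes G :: "'a::metric_space set"
  assumes gs: "arc_decomposition gs G" and C: "C \<subseteq> G" "connected C" "a \<in> C" "b \<in> C" "a \<noteq> b"
  obtains i t where "i < length gs" "0 < t" "t < 1" "(gs!i) t \<in> C"
proof -
  have "infinite C"
    using C connected_finite_iff_sing by blast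
  moreover have "finite (\<Union>g\<in>set gs. {g 0, g 1})"
    by simp
  ultimately obtain x where x: "x \<in> C" "x \<notin> (\<Union>g\<in>set gs. {g 0, g 1})"
    by (meson finite_subset subsetI)
  then obtain i where i: "i < length gs" "x \<in> path_image (gs!i)"
    using gs C(1) by (meson arc_decomposition_memE subsetD)
  then obtain t where t: "t \<in> {0..1}" "x = (gs!i) t"
    by (auto simp: path_image_def)
  have "gs!i \<in> set gs"
    using i(1) by simp
  then have "t \<noteq> 0" "t \<noteq> 1"
    using x(2) t(2) by auto
  with t(1) have "0 < t" "t < 1"
    by auto
  then show thesis
    using that i(1) x(1) t(2) by blast
qed

lemma connected_subset_graph_has_interior:
  fixes G :: "'a::metric_space set"
  assumes "is_graph G" and C: "C \<subseteq> G" "connected C" "a \<in> C" "b \<in> C" "a \<noteq> b"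
  shows "\<exists>W. openin (top_of_set G) W \<and> W \<noteq> {} \<and> W \<subseteq> C"
proof (rule ccontr)
  assume no_interior: "\<not> ?thesis"
  obtain gs where gs: "arc_decomposition gs G"
    using assms(1) by (auto simp: is_graph_iff_arc_decomposition)
  obtain i t where i: "i < length gs" and t: "0 < t" "t < 1" "(gs!i) t \<in> C"
    using arc_decomposition_connected_meets_open_arc[OF gs C] .
  define g where "g = gs!i"
  have "arc g"
    unfolding g_def using gs i by (rule arc_decomposition_nth_arc)
  have no_segment: "\<exists>s\<in>{\<alpha><..<\<beta>}. g s \<notin> C" if "0 \<le> \<alpha>" "\<alpha> < \<beta>" "\<beta> \<le> 1" for \<alpha> \<beta>
  proof -
    have "g ` {\<alpha><..<\<beta>} \<noteq> {}"
      using that by auto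
    then show ?thesis
      using no_interior arc_decomposition_open_segment_openin[OF gs i that] unfolding g_def by blast
  qed
  \<comment> \<open>Points of the arc outside \<open>C\<close> on both sides of \<open>g t\<close> trap the connected set \<open>C\<close>
    inside an open sub-arc; but a connected subset of an arc with two points contains
    a whole sub-arc, which is open in the graph.\<close>
  obtain a' where a': "0 \<le> a'" "a' < t" "g a' \<notin> C"
  proof -
    obtain s where "s \<in> {0<..<t}" "g s \<notin> C"
      using no_segment[of 0 t] t by auto
    then show thesis by (intro that[of s]) auto
  qed
  obtain b' where b': "t < b'" "b' \<le> 1" "g b' \<notin> C"
  proof -
    obtain s where "s \<in> {t<..<1}" "g s \<notin> C"
      using no_segment[of t 1] t by auto
    then show thesis by (intro that[of s]) auto
  qed
  have "C \<subseteq> g ` {a'<..<b'}"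
    unfolding g_def
    by (rule connected_subset_arc_decomposition_trapped[OF gs i C(1,2)]) (use a' b' t g_def in auto)
  then obtain u v where u: "u \<in> {a'<..<b'}" "a = g u" and v: "v \<in> {a'<..<b'}" "b = g v"
    using C(3,4) by blast
  have "C \<subseteq> path_image g"
    using \<open>C \<subseteq> g ` {a'<..<b'}\<close> a' b' unfolding path_image_def by auto
  then have "g ` closed_segment u v \<subseteq> C"
    using arc_image_closed_segment_subset[OF \<open>arc g\<close> _ C(2)] u v a' b' C(3,4) by simp
  moreover obtain s where "s \<in> {min u v<..<max u v}" "g s \<notin> C"
  proof -
    have "u \<noteq> v"
      using C(5) u v by auto
    then have "0 \<le> min u v" "min u v < max u v" "max u v \<le> 1"
      using u v a' b' by auto
    then show thesis
      using no_segment that by blast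
  qed
  moreover have "{min u v<..<max u v} \<subseteq> closed_segment u v"
    by (auto simp: closed_segment_eq_real_ivl)
  ultimately show False
    by blast
qed

lemma openin_graph_not_totally_disconnected:
  fixes G :: "'a::metric_space set"
  assumes "is_graph G" "openin (top_of_set G) W" "W \<noteq> {}"
  shows "\<not> totally_disconnected W"
proof -
  obtain gs where gs: "arc_decomposition gs G"
    using assms(1) by (auto simp: is_graph_iff_arc_decomposition)
  obtain c where c: "c \<in> W"
    using assms(3) by blast
  then obtain r where r: "r > 0" "ball c r \<inter> G \<subseteq> W"
    using assms(2) by (meson openin_contains_ball)
  obtain i where i: "i < length gs" "c \<in> path_image (gs!i)"
    using gs c assms(2) by (meson arc_decomposition_memE openin_imp_subset subsetD)
  define g where "g = gs!i"
  have "arc g"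
    unfolding g_def using gs i(1) by (rule arc_decomposition_nth_arc)
  then have inj: "inj_on g {0..1}" and cont: "continuous_on {0..1} g"
    by (auto simp: arc_def path_def)
  obtain t where t: "t \<in> {0..1}" "c = g t"
    using i(2) unfolding g_def path_image_def by auto
  have "\<exists>e>0. \<forall>s\<in>{0..1}. dist s t < e \<longrightarrow> dist (g s) (g t) < r"
    using cont t(1) r(1) unfolding continuous_on_iff by blast
  then obtain e where e: "e > 0" "\<And>s. s \<in> {0..1} \<Longrightarrow> dist s t < e \<Longrightarrow> dist (g s) c < r"
    using t(2) by blast
  define s where "s = (if t \<le> 1/2 then t + min (1/2) (e/2) else t - min (1/2) (e/2))"
  have s: "s \<in> {0..1}" "s \<noteq> t" "closed_segment t s \<subseteq> {0..1}"
    and near: "\<And>s'. s' \<in> closed_segment t s \<Longrightarrow> dist s' t < e"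
    using t e(1) unfolding s_def by (auto simp: closed_segment_eq_real_ivl dist_real_def split: if_splits)
  have "g ` closed_segment t s \<subseteq> ball c r \<inter> G"
  proof -
    have "g ` closed_segment t s \<subseteq> path_image g"
      using s(3) unfolding path_image_def by (rule image_mono)
    moreover have "path_image g \<subseteq> G"
      using gs i(1) unfolding arc_decomposition_def g_def by auto
    moreover have "g ` closed_segment t s \<subseteq> ball c r"
      using e(2) near s(3) by (auto simp: dist_commute)
    ultimately show ?thesis
      by blast
  qed
  moreover have "connected (g ` closed_segment t s)"
    using cont s(3) by (intro connected_continuous_image) (auto elim: continuous_on_subset)
  moreover have "g t \<noteq> g s"
    using inj t(1) s(1,2) unfolding inj_on_def by blast
  ultimately have "g ` closed_segment t s \<subseteq> W" "connected (g ` closed_segment t s)"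
    and "g t \<in> g ` closed_segment t s" "g s \<in> g ` closed_segment t s" "g t \<noteq> g s"
    using r(2) by auto
  then show ?thesis
    unfolding totally_disconnected_def by blast
qed

lemma totally_disconnected_subset_graph_iff:
  fixes G :: "'a::metric_space set"
  assumes "is_graph G" "K \<subseteq> G"
  shows "totally_disconnected K \<longleftrightarrow> (\<forall>W. openin (top_of_set G) W \<and> W \<subseteq> K \<longrightarrow> W = {})"
proof
  assume K: "totally_disconnected K"
  show "\<forall>W. openin (top_of_set G) W \<and> W \<subseteq> K \<longrightarrow> W = {}"
  proof (intro allI impI)
    fix W assume W: "openin (top_of_set G) W \<and> W \<subseteq> K"
    then have "totally_disconnected W"
      using totally_disconnected_subset[OF K] by blast
    then show "W = {}"
      using openin_graph_not_totally_disconnected[OF assms(1)] W by blast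
  qed
next
  assume no_interior: "\<forall>W. openin (top_of_set G) W \<and> W \<subseteq> K \<longrightarrow> W = {}"
  show "totally_disconnected K"
    unfolding totally_disconnected_def
  proof (intro allI impI)
    fix C assume C: "C \<subseteq> K \<and> connected C"
    show "\<exists>x. C \<subseteq> {x}"
    proof (rule ccontr)
      assume "\<nexists>x. C \<subseteq> {x}"
      then obtain a b where ab: "a \<in> C" "b \<in> C" "a \<noteq> b"
        by blast
      have "C \<subseteq> G"
        using C assms(2) by blast
      then obtain W where "openin (top_of_set G) W" "W \<noteq> {}" "W \<subseteq> C"
        using connected_subset_graph_has_interior[OF assms(1) _ _ ab] C by blast
      then show False
        using no_interior C by blast
    qed
  qed
qed

section \<open>\<pi>-bases and residual sets\<close>

definition pi_base :: "'a::topological_space set \<Rightarrow> 'a set set \<Rightarrow> bool" where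
  "pi_base S \<J> \<longleftrightarrow> (\<forall>J\<in>\<J>. openin (top_of_set S) J \<and> J \<noteq> {}) \<and>
     (\<forall>W. openin (top_of_set S) W \<and> W \<noteq> {} \<longrightarrow> (\<exists>J\<in>\<J>. J \<subseteq> W))"

lemma compact_countable_pi_base:
  fixes S :: "'a::metric_space set"
  assumes "compact S"
  obtains \<J> where "countable \<J>" "pi_base S \<J>"
proof -
  have "\<forall>n::nat. \<exists>Q. finite Q \<and> Q \<subseteq> S \<and> S \<subseteq> (\<Union>c\<in>Q. ball c (1 / real (Suc n)))"
    using seq_compact_imp_totally_bounded[OF compact_imp_seq_compact[OF assms]] by simp
  then obtain Q where "\<forall>n. finite (Q n) \<and> Q n \<subseteq> S \<and> S \<subseteq> (\<Union>c\<in>Q n. ball c (1 / real (Suc n)))"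
    by (rule choice[THEN exE])
  then have Q: "\<And>n. finite (Q n)" "\<And>n. Q n \<subseteq> S"
    "\<And>n. S \<subseteq> (\<Union>c\<in>Q n. ball c (1 / real (Suc n)))"
    by blast+
  define \<J> where "\<J> = (\<lambda>(n, c). S \<inter> ball c (1 / real (Suc n))) ` Sigma UNIV Q"
  have "countable \<J>"
    unfolding \<J>_def using Q(1) by (intro countable_image countable_SIGMA) (auto intro: countable_finite)
  moreover have "openin (top_of_set S) J \<and> J \<noteq> {}" if J_in: "J \<in> \<J>" for J
  proof -
    obtain n c where J: "J = S \<inter> ball c (1 / real (Suc n))" "c \<in> Q n"
      using J_in unfolding \<J>_def by auto
    then have "c \<in> J"
      using Q(2) by auto
    then show ?thesis
      using J(1) by (auto simp: openin_open_Int)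
  qed
  moreover have "\<exists>J\<in>\<J>. J \<subseteq> W" if W: "openin (top_of_set S) W" "W \<noteq> {}" for W
  proof -
    obtain y e where y: "y \<in> W" and e: "e > 0" "ball y e \<inter> S \<subseteq> W"
      using W by (meson all_not_in_conv openin_contains_ball)
    obtain n where n: "inverse (real (Suc n)) < e / 2"
      using reals_Archimedean[of "e / 2"] e(1) by auto
    have "y \<in> S"
      using W y openin_imp_subset by blast
    then obtain c where c: "c \<in> Q n" "dist c y < 1 / real (Suc n)"
      using Q(3)[of n] by auto
    have "S \<inter> ball c (1 / real (Suc n)) \<subseteq> ball y e \<inter> S"
    proof
      fix z assume z: "z \<in> S \<inter> ball c (1 / real (Suc n))"
      have "dist y z \<le> dist c y + dist c z"
        by (rule dist_triangle3)
      also have "\<dots> < e"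
        using z c(2) n by (simp add: inverse_eq_divide)
      finally show "z \<in> ball y e \<inter> S"
        using z by simp
    qed
    then show ?thesis
      using c(1) e(2) unfolding \<J>_def by blast
  qed
  ultimately show thesis
    using that unfolding pi_base_def by blast
qed

lemma pi_base_no_interior_iff:
  assumes "pi_base S \<J>"
  shows "(\<forall>W. openin (top_of_set S) W \<and> W \<subseteq> K \<longrightarrow> W = {}) \<longleftrightarrow> (\<forall>J\<in>\<J>. \<not> J \<subseteq> K)"
proof (intro iffI ballI allI impI notI)
  fix J assume no_interior: "\<forall>W. openin (top_of_set S) W \<and> W \<subseteq> K \<longrightarrow> W = {}"
    and J: "J \<in> \<J>" "J \<subseteq> K"
  have "openin (top_of_set S) J" "J \<noteq> {}"
    using assms J(1) unfolding pi_base_def by auto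
  then show False
    using no_interior J(2) by blast
next
  fix W assume no_basic: "\<forall>J\<in>\<J>. \<not> J \<subseteq> K" and W: "openin (top_of_set S) W \<and> W \<subseteq> K"
  show "W = {}"
  proof (rule ccontr)
    assume "W \<noteq> {}"
    then have "\<exists>J\<in>\<J>. J \<subseteq> W"
      using assms W unfolding pi_base_def by simp
    then obtain J where "J \<in> \<J>" "J \<subseteq> W"
      by blast
    then show False
      using no_basic W by blast
  qed
qed

lemma nowhere_dense_in_closedin_openin:
  assumes U: "openin (top_of_set S) U" and N: "closedin (top_of_set U) N"
    and no_interior: "\<And>V. openin (top_of_set S) V \<Longrightarrow> V \<subseteq> N \<Longrightarrow> V = {}"
  shows "nowhere_dense_in S N"
  unfolding nowhere_dense_in_def
proof (intro conjI allI impI)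
  show "N \<subseteq> S"
    using U N by (meson closedin_imp_subset openin_imp_subset subset_trans)
  fix V assume V: "openin (top_of_set S) V \<and> V \<subseteq> S \<inter> closure N"
  obtain T where T: "closed T" "N = U \<inter> T"
    using N by (auto simp: closedin_closed)
  then have "closure N \<subseteq> T"
    by (simp add: closure_minimal)
  then have "V \<inter> U \<subseteq> N"
    using V T(2) by blast
  moreover have "openin (top_of_set S) (V \<inter> U)"
    using V U by (simp add: openin_Int)
  ultimately have VU: "V \<inter> U = {}"
    using no_interior by blast
  obtain Ob where Ob: "open Ob" "V = S \<inter> Ob"
    using V by (auto simp: openin_open)
  \<comment> \<open>\<open>Ob\<close> misses \<open>U \<supseteq> N\<close>, hence misses \<open>closure N \<supseteq> V\<close>\<close>
  have "Ob \<inter> N = {}"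
    using VU Ob(2) \<open>N \<subseteq> S\<close> T(2) by blast
  then have "Ob \<inter> closure N = {}"
    using Ob(1) by (simp add: open_Int_closure_eq_empty)
  then show "V = {}"
    using V Ob(2) by blast
qed

lemma residual_in_locally_determined:
  fixes U :: "'i \<Rightarrow> 'a::topological_space set" and S :: "'i \<Rightarrow> 'j \<Rightarrow> 'a set"
  assumes countable_index: "countable I" "countable \<J>" and cover: "B \<subseteq> (\<Union>i\<in>I. U i)"
    and nowhere_dense: "\<And>i J. i \<in> I \<Longrightarrow> J \<in> \<J> \<Longrightarrow> nowhere_dense_in B (S i J)"
    and local: "\<And>i J. i \<in> I \<Longrightarrow> J \<in> \<J> \<Longrightarrow> S i J \<subseteq> U i"
    and determined: "\<And>i b. i \<in> I \<Longrightarrow> b \<in> B \<Longrightarrow> b \<in> U i \<Longrightarrow> P b \<longleftrightarrow> (\<forall>J\<in>\<J>. b \<notin> S i J)"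
  shows "residual_in B {b\<in>B. P b}"
  unfolding residual_in_def
proof (intro exI conjI ballI)
  show "countable (\<Union>i\<in>I. S i ` \<J>)"
    using countable_index by (intro countable_UN countable_image)
  show "nowhere_dense_in B N" if "N \<in> (\<Union>i\<in>I. S i ` \<J>)" for N
    using that nowhere_dense by blast
  show "{b\<in>B. P b} = B - \<Union>(\<Union>i\<in>I. S i ` \<J>)"
  proof (intro set_eqI iffI)
    fix b assume "b \<in> {b\<in>B. P b}"
    then have b: "b \<in> B" "P b"
      by simp_all
    have "b \<notin> S i J" if i: "i \<in> I" and J: "J \<in> \<J>" for i J
    proof
      assume bS: "b \<in> S i J"
      then have "b \<in> U i"
        using local[OF i J] by blast
      then have "\<forall>J\<in>\<J>. b \<notin> S i J"
        using determined[OF i b(1)] b(2) by simp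
      then show False
        using J bS by blast
    qed
    then show "b \<in> B - \<Union>(\<Union>i\<in>I. S i ` \<J>)"
      using b by blast
  next
    fix b assume b: "b \<in> B - \<Union>(\<Union>i\<in>I. S i ` \<J>)"
    then have bB: "b \<in> B"
      by blast
    then obtain i where i: "i \<in> I" and bU: "b \<in> U i"
      using cover by blast
    have "\<forall>J\<in>\<J>. b \<notin> S i J"
      using b i by blast
    then have "P b"
      using determined[OF i bB bU] by simp
    then show "b \<in> {b\<in>B. P b}"
      using bB by simp
  qed
qed

section \<open>Local trivializations of graph bundles\<close>

definition local_trivialization ::
  "'e::topological_space set \<Rightarrow> 'b::topological_space set \<Rightarrow> ('e \<Rightarrow> 'b) \<Rightarrow>
   'g::topological_space set \<Rightarrow> 'b set \<Rightarrow> ('e \<Rightarrow> 'b \<times> 'g) \<Rightarrow> ('b \<times> 'g \<Rightarrow> 'e) \<Rightarrow> bool" where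
  "local_trivialization E B p G U h k \<longleftrightarrow>
     openin (top_of_set B) U \<and> homeomorphism {x\<in>E. p x \<in> U} (U \<times> G) h k \<and>
     (\<forall>x\<in>{x\<in>E. p x \<in> U}. fst (h x) = p x)"

lemma local_trivialization_inverse:
  assumes "local_trivialization E B p G U h k" "b \<in> U" "y \<in> G"
  shows "k (b, y) \<in> E" "p (k (b, y)) = b" "h (k (b, y)) = (b, y)"
proof -
  have hom: "homeomorphism {x\<in>E. p x \<in> U} (U \<times> G) h k"
    and fst_h: "\<forall>x\<in>{x\<in>E. p x \<in> U}. fst (h x) = p x"
    using assms(1) unfolding local_trivialization_def by blast+
  have "(b, y) \<in> U \<times> G"
    using assms(2,3) by simp
  then have k_in: "k (b, y) \<in> {x\<in>E. p x \<in> U}" and hk: "h (k (b, y)) = (b, y)"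
    using hom unfolding homeomorphism_def by blast+
  show "k (b, y) \<in> E" "h (k (b, y)) = (b, y)"
    using k_in hk by simp_all
  show "p (k (b, y)) = b"
    using fst_h k_in hk by force
qed

lemma local_trivialization_apply:
  assumes "local_trivialization E B p G U h k" "x \<in> E" "p x \<in> U"
  shows "h x = (p x, snd (h x))" "snd (h x) \<in> G" "k (h x) = x"
proof -
  have hom: "homeomorphism {x\<in>E. p x \<in> U} (U \<times> G) h k"
    and fst_h: "\<forall>x\<in>{x\<in>E. p x \<in> U}. fst (h x) = p x"
    using assms(1) unfolding local_trivialization_def by blast+
  have x: "x \<in> {x\<in>E. p x \<in> U}"
    using assms(2,3) by simp
  show "h x = (p x, snd (h x))"
    using fst_h x by (simp add: prod_eq_iff)
  have "h x \<in> U \<times> G"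
    using hom x unfolding homeomorphism_def by blast
  then show "snd (h x) \<in> G"
    by auto
  show "k (h x) = x"
    using hom x unfolding homeomorphism_def by blast
qed

lemma compact_graph_bundle_finite_atlas:
  assumes "compact_graph_bundle E B p G"
  obtains \<D> h k where "finite \<D>" "B \<subseteq> \<Union>\<D>"
    "\<And>U. U \<in> \<D> \<Longrightarrow> local_trivialization E B p G U (h U) (k U)"
proof -
  let ?\<U> = "{U. \<exists>h k. local_trivialization E B p G U h k}"
  have "compact B"
    using assms unfolding compact_graph_bundle_def by blast
  moreover have "\<forall>U\<in>?\<U>. openin (top_of_set B) U"
    unfolding local_trivialization_def by blast
  moreover have "B \<subseteq> \<Union>?\<U>"
    using assms unfolding compact_graph_bundle_def local_trivialization_def by blast
  ultimately obtain \<D> where \<D>: "\<D> \<subseteq> ?\<U>" "finite \<D>" "B \<subseteq> \<Union>\<D>"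
    unfolding compact_eq_openin_cover by meson
  then have "\<forall>U\<in>\<D>. \<exists>hk. local_trivialization E B p G U (fst hk) (snd hk)"
    by auto
  then obtain hk where hk: "\<forall>U\<in>\<D>. local_trivialization E B p G U (fst (hk U)) (snd (hk U))"
    by (rule bchoice[THEN exE])
  show thesis
    by (rule that[of \<D> "\<lambda>U. fst (hk U)" "\<lambda>U. snd (hk U)"]) (use \<D> hk in auto)
qed

definition slice_parameters :: "'e set \<Rightarrow> 'b set \<Rightarrow> ('b \<times> 'g \<Rightarrow> 'e) \<Rightarrow> 'g set \<Rightarrow> 'b set" where
  "slice_parameters M U k J = {b\<in>U. \<forall>y\<in>J. k (b, y) \<in> M}"

lemma local_trivialization_fibre_totally_disconnected_iff:
  assumes triv: "local_trivialization E B p G U h k" and b: "b \<in> U" and M: "M \<subseteq> E"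
  shows "totally_disconnected {x\<in>M. p x = b} \<longleftrightarrow> totally_disconnected {y\<in>G. k (b, y) \<in> M}"
proof -
  have hom: "homeomorphism {x\<in>E. p x \<in> U} (U \<times> G) h k"
    using triv unfolding local_trivialization_def by blast
  have in_chart: "x \<in> E" "p x \<in> U" if "x \<in> {x\<in>M. p x = b}" for x
    using that M b by auto
  show ?thesis
  proof
    assume "totally_disconnected {x\<in>M. p x = b}"
    then show "totally_disconnected {y\<in>G. k (b, y) \<in> M}"
    proof (rule totally_disconnected_injective_preimage[rotated 3])
      have "continuous_on (U \<times> G) k"
        using hom unfolding homeomorphism_def by blast
      then show "continuous_on {y\<in>G. k (b, y) \<in> M} (\<lambda>y. k (b, y))"
        using b by (auto intro!: continuous_on_compose2[of "U \<times> G" k] continuous_intros)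
      show "inj_on (\<lambda>y. k (b, y)) {y\<in>G. k (b, y) \<in> M}"
      proof (rule inj_onI)
        fix y y' assume y: "y \<in> {y\<in>G. k (b, y) \<in> M}" and y': "y' \<in> {y\<in>G. k (b, y) \<in> M}"
          and eq: "k (b, y) = k (b, y')"
        have "(b, y) = h (k (b, y))"
          using local_trivialization_inverse(3)[OF triv b] y by simp
        also have "\<dots> = h (k (b, y'))"
          using eq by simp
        also have "\<dots> = (b, y')"
          using local_trivialization_inverse(3)[OF triv b] y' by simp
        finally show "y = y'"
          by simp
      qed
      show "(\<lambda>y. k (b, y)) ` {y\<in>G. k (b, y) \<in> M} \<subseteq> {x\<in>M. p x = b}"
        using local_trivialization_inverse(2)[OF triv b] by auto
    qed
  next
    assume "totally_disconnected {y\<in>G. k (b, y) \<in> M}"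
    then show "totally_disconnected {x\<in>M. p x = b}"
    proof (rule totally_disconnected_injective_preimage[rotated 3])
      have "continuous_on {x\<in>E. p x \<in> U} h"
        using hom unfolding homeomorphism_def by blast
      then show "continuous_on {x\<in>M. p x = b} (\<lambda>x. snd (h x))"
        using in_chart by (auto intro!: continuous_on_snd elim: continuous_on_subset)
      show "inj_on (\<lambda>x. snd (h x)) {x\<in>M. p x = b}"
      proof (rule inj_onI)
        fix x x' assume x: "x \<in> {x\<in>M. p x = b}" and x': "x' \<in> {x\<in>M. p x = b}"
          and eq: "snd (h x) = snd (h x')"
        have "h x = h x'"
          using local_trivialization_apply(1)[OF triv in_chart[OF x]]
            local_trivialization_apply(1)[OF triv in_chart[OF x']] x x' eq by simp
        then show "x = x'"
          using local_trivialization_apply(3)[OF triv in_chart[OF x]]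
            local_trivialization_apply(3)[OF triv in_chart[OF x']] by metis
      qed
      show "(\<lambda>x. snd (h x)) ` {x\<in>M. p x = b} \<subseteq> {y\<in>G. k (b, y) \<in> M}"
      proof
        fix y assume "y \<in> (\<lambda>x. snd (h x)) ` {x\<in>M. p x = b}"
        then obtain x where x: "x \<in> {x\<in>M. p x = b}" "y = snd (h x)"
          by blast
        then have "h x = (b, y)" "k (h x) = x" "y \<in> G"
          using local_trivialization_apply[OF triv in_chart[OF x(1)]] by auto
        then show "y \<in> {y\<in>G. k (b, y) \<in> M}"
          using x(1) by auto
      qed
    qed
  qed
qed

lemma local_trivialization_fibre_totally_disconnected_iff_pi_base:
  assumes triv: "local_trivialization E B p G U h k" and G: "is_graph G" "pi_base G \<J>"
    and "M \<subseteq> E" "b \<in> U"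
  shows "totally_disconnected {x\<in>M. p x = b} \<longleftrightarrow> (\<forall>J\<in>\<J>. b \<notin> slice_parameters M U k J)"
proof -
  have "totally_disconnected {x\<in>M. p x = b} \<longleftrightarrow> totally_disconnected {y\<in>G. k (b, y) \<in> M}"
    by (rule local_trivialization_fibre_totally_disconnected_iff[OF triv assms(5,4)])
  also have "\<dots> \<longleftrightarrow> (\<forall>W. openin (top_of_set G) W \<and> W \<subseteq> {y\<in>G. k (b, y) \<in> M} \<longrightarrow> W = {})"
    by (rule totally_disconnected_subset_graph_iff[OF G(1)]) blast
  also have "\<dots> \<longleftrightarrow> (\<forall>J\<in>\<J>. \<not> J \<subseteq> {y\<in>G. k (b, y) \<in> M})"
    by (rule pi_base_no_interior_iff[OF G(2)])
  also have "\<dots> \<longleftrightarrow> (\<forall>J\<in>\<J>. b \<notin> slice_parameters M U k J)"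
  proof -
    have "J \<subseteq> G" if "J \<in> \<J>" for J
      using G(2) that unfolding pi_base_def by (blast dest: openin_imp_subset)
    then show ?thesis
      using assms(5) unfolding slice_parameters_def by blast
  qed
  finally show ?thesis .
qed

lemma local_trivialization_nowhere_dense:
  assumes triv: "local_trivialization E B p G U h k"
    and p: "continuous_on E p" "p ` E \<subseteq> B"
    and M: "closedin (top_of_set E) M" "nowhere_dense_in E M"
    and J: "openin (top_of_set G) J" "J \<noteq> {}"
  shows "nowhere_dense_in B (slice_parameters M U k J)"
proof -
  have U: "openin (top_of_set B) U"
    and hom: "homeomorphism {x\<in>E. p x \<in> U} (U \<times> G) h k"
    using triv unfolding local_trivialization_def by blast+
  have k_cont: "continuous_on (U \<times> G) k" and k_img: "k ` (U \<times> G) \<subseteq> E"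
    using hom unfolding homeomorphism_def by auto
  have JG: "J \<subseteq> G"
    using J(1) by (rule openin_imp_subset)
  show ?thesis
    unfolding slice_parameters_def
  proof (rule nowhere_dense_in_closedin_openin[OF U])
    have "closedin (top_of_set U) (U \<inter> (\<lambda>b. k (b, y)) -` M)" if "y \<in> J" for y
    proof (rule continuous_closedin_preimage_gen[OF _ _ M(1)])
      show "continuous_on U (\<lambda>b. k (b, y))"
        using that JG by (auto intro!: continuous_on_compose2[OF k_cont] continuous_intros)
      show "(\<lambda>b. k (b, y)) \<in> U \<rightarrow> E"
        using that JG k_img by auto
    qed
    then have "closedin (top_of_set U) (\<Inter>y\<in>J. U \<inter> (\<lambda>b. k (b, y)) -` M)"
      using J(2) by blast
    moreover have "(\<Inter>y\<in>J. U \<inter> (\<lambda>b. k (b, y)) -` M) = {b\<in>U. \<forall>y\<in>J. k (b, y) \<in> M}"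
      using J(2) by auto
    ultimately show "closedin (top_of_set U) {b\<in>U. \<forall>y\<in>J. k (b, y) \<in> M}"
      by argo
  next
    \<comment> \<open>an open set of parameters over which \<open>M\<close> contains the slice over \<open>J\<close> gives an open subset of \<open>M\<close>\<close>
    fix V assume V: "openin (top_of_set B) V" "V \<subseteq> {b\<in>U. \<forall>y\<in>J. k (b, y) \<in> M}"
    have "V \<subseteq> U" "U \<subseteq> B"
      using V(2) openin_imp_subset[OF U] by auto
    then have "openin (top_of_set U) V"
      using V(1) by (blast intro: openin_subset_trans)
    then have "openin (top_of_set (U \<times> G)) (V \<times> J)"
      using J(1) by (rule openin_Times)
    then have "openin (top_of_set {x\<in>E. p x \<in> U}) (k ` (V \<times> J))"
      using homeomorphism_imp_open_map[OF homeomorphism_symD[OF hom]] by blast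
    moreover have "openin (top_of_set E) {x\<in>E. p x \<in> U}"
    proof -
      have "p \<in> E \<rightarrow> B"
        using p(2) by auto
      then have "openin (top_of_set E) (E \<inter> p -` U)"
        using continuous_openin_preimage[OF p(1) _ U] by blast
      moreover have "E \<inter> p -` U = {x\<in>E. p x \<in> U}"
        by auto
      ultimately show ?thesis
        by simp
    qed
    ultimately have "openin (top_of_set E) (k ` (V \<times> J))"
      by (rule openin_trans)
    moreover have "k ` (V \<times> J) \<subseteq> M" "M \<subseteq> E"
      using V(2) M(2) unfolding nowhere_dense_in_def by auto
    then have "k ` (V \<times> J) \<subseteq> E \<inter> closure M"
      using closure_subset by blast
    ultimately have "k ` (V \<times> J) = {}"
      using M(2) unfolding nowhere_dense_in_def by blast
    then show "V = {}"
      using J(2) by blast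
  qed
qed

theorem lemma17:
  fixes E :: "'e::metric_space set" and B :: "'b::metric_space set"
    and p :: "'e \<Rightarrow> 'b" and G :: "'g::metric_space set" and M :: "'e set"
  assumes "compact_graph_bundle E B p G"
    and "M \<subseteq> E" and "closedin (top_of_set E) M" and "nowhere_dense_in E M"
  shows "residual_in B {b\<in>B. totally_disconnected {x\<in>M. p x = b}}"
proof -
  have G: "is_graph G" and p: "continuous_on E p" "p ` E \<subseteq> B"
    using assms(1) unfolding compact_graph_bundle_def by blast+
  obtain \<D> h k where \<D>: "finite \<D>" "B \<subseteq> \<Union>\<D>"
    and chart: "\<And>U. U \<in> \<D> \<Longrightarrow> local_trivialization E B p G U (h U) (k U)"
    using compact_graph_bundle_finite_atlas[OF assms(1)] by blast
  have "compact G"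
    using G by (simp add: is_graph_iff_arc_decomposition)
  then obtain \<J> where \<J>: "countable \<J>" "pi_base G \<J>"
    by (rule compact_countable_pi_base)
  show ?thesis
  proof (rule residual_in_locally_determined[where U = "\<lambda>U. U" and S = "\<lambda>U. slice_parameters M U (k U)"])
    show "countable \<D>" "countable \<J>" "B \<subseteq> (\<Union>U\<in>\<D>. U)"
      using \<D> \<J>(1) by (auto simp: countable_finite)
    show "nowhere_dense_in B (slice_parameters M U (k U) J)" if "U \<in> \<D>" "J \<in> \<J>" for U J
      using \<J>(2) that(2) unfolding pi_base_def
      by (intro local_trivialization_nowhere_dense[OF chart[OF that(1)] p assms(3,4)]) auto
    show "slice_parameters M U (k U) J \<subseteq> U" for U J
      by (auto simp: slice_parameters_def)
    show "totally_disconnected {x\<in>M. p x = b} \<longleftrightarrow> (\<forall>J\<in>\<J>. b \<notin> slice_parameters M U (k U) J)"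
      if "U \<in> \<D>" "b \<in> U" for U b
      by (rule local_trivialization_fibre_totally_disconnected_iff_pi_base[OF chart[OF that(1)] G \<J>(2) assms(2) that(2)])
  qed
qed

end
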